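(* Let $n$ and $0<n_1<\cdots<n_d<n$ be integers with $m_1=n_1$, $m_k=n_k-n_{k-1}$ ($2\le k\le d$), $m_{d+1}=n-n_d$, and regard $\mathrm{Flag}(n_1,\dots,n_d;n)=\{(VJ_1V^{\mathsf T},\dots,VJ_dV^{\mathsf T}):V\in\mathrm{O}(n)\}$ as a submanifold of $(\mathbb{R}^{n\times n})^d$ with the Euclidean (Frobenius) inner product $\langle (X_k),(Y_k)\rangle=\sum_k\operatorname{tr}(X_k^{\mathsf T}Y_k)$. Let $V(t)$ be a differentiable curve in $\mathrm{O}(n)$, $\Lambda(t)=V(t)^{\mathsf T}\dot V(t)\in\mathfrak{so}(n)$, and assume $\Lambda(p,p)(t)\equiv 0$ for $p=1,\dots,d+1$. Let $c(t)=V(t)(J_1,\dots,J_d)V(t)^{\mathsf T}$ and \[ T_2(t)=V(t)\big(\Lambda(t)^2J_1+J_1\Lambda(t)^2,\dots,\Lambda(t)^2J_d+J_d\Lambda(t)^2\big)V(t)^{\mathsf T}. \] Then the orthogonal projection of $T_2(t)$ onto $\mathbb{T}_{c(t)}\mathrm{Flag}(n_1,\dots,n_d;n)$ is zero.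
   Context: $J_k=\operatorname{diag}(-I_{m_1},\dots,-I_{m_{k-1}},I_{m_k},-I_{m_{k+1}},\dots,-I_{m_{d+1}})$. $V(X_1,\dots,X_d)V^{\mathsf T}$ denotes $(VX_1V^{\mathsf T},\dots,VX_dV^{\mathsf T})$. For an $n\times n$ matrix $M$, $M(p,q)$ denotes its $(p,q)$ block in the partition $n=m_1+\cdots+m_{d+1}$. *)

theory Defs
  imports "HOL-Analysis.Analysis"
begin

text \<open>Matrices are real^'n^'n; the index type 'n is finite and linearly ordered,
  so index i sits at (0-based) position card {j. j < i}.  The partition
  n = m_1 + ... + m_(d+1) is given by the cut points ns 1 < ... < ns d.\<close>

definition idx_pos :: "'n::{finite,linorder} \<Rightarrow> nat" where
  "idx_pos i = card {j. j < i}"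

definition blk :: "(nat \<Rightarrow> nat) \<Rightarrow> nat \<Rightarrow> 'n::{finite,linorder} \<Rightarrow> nat" where
  "blk ns d i = card {k \<in> {1..d}. ns k \<le> idx_pos i} + 1"

definition Jmat :: "(nat \<Rightarrow> nat) \<Rightarrow> nat \<Rightarrow> nat \<Rightarrow> real^('n::{finite,linorder})^('n::{finite,linorder})" where
  "Jmat ns d k = (\<chi> i. \<chi> j. if i = j then (if blk ns d i = k then 1 else -1) else 0)"

text \<open>Elements of (R^(n x n))^d are functions k \<mapsto> X_k, relevant for k in {1..d}.\<close>
definition tuple_conj :: "nat \<Rightarrow> real^('n::finite)^('n::finite) \<Rightarrow> (nat \<Rightarrow> real^'n^'n) \<Rightarrow> (nat \<Rightarrow> real^'n^'n)" where
  "tuple_conj d V X = (\<lambda>k. if k \<in> {1..d} then V ** X k ** transpose V else 0)"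

definition flag_set :: "(nat \<Rightarrow> nat) \<Rightarrow> nat \<Rightarrow> (nat \<Rightarrow> real^('n::{finite,linorder})^('n::{finite,linorder})) set" where
  "flag_set ns d = {tuple_conj d V (Jmat ns d) | V. orthogonal_matrix V}"

definition frob_inner :: "nat \<Rightarrow> (nat \<Rightarrow> real^('n::finite)^('n::finite)) \<Rightarrow> (nat \<Rightarrow> real^'n^'n) \<Rightarrow> real" where
  "frob_inner d X Y = (\<Sum>k=1..d. \<Sum>i\<in>UNIV. \<Sum>j\<in>UNIV. X k $ i $ j * Y k $ i $ j)"

text \<open>Tangent space of a subset S of (R^(n x n))^d at c: velocities at 0 of curves
  through c that stay in S near 0 (for an embedded submanifold this is the tangent space).\<close>
definition tangent_space :: "(nat \<Rightarrow> real^('n::finite)^('n::finite)) set \<Rightarrow> (nat \<Rightarrow> real^'n^'n) \<Rightarrow> (nat \<Rightarrow> real^'n^'n) set" where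
  "tangent_space S c = {v. \<exists>\<gamma> e. e > 0 \<and> \<gamma> 0 = c \<and> (\<forall>t. \<bar>t\<bar> < e \<longrightarrow> \<gamma> t \<in> S) \<and>
       (\<forall>k. ((\<lambda>t. \<gamma> t k) has_vector_derivative v k) (at 0))}"

definition orth_proj :: "nat \<Rightarrow> (nat \<Rightarrow> real^('n::finite)^('n::finite)) set \<Rightarrow> (nat \<Rightarrow> real^'n^'n) \<Rightarrow> (nat \<Rightarrow> real^'n^'n)" where
  "orth_proj d T x = (THE p. p \<in> T \<and> (\<forall>w\<in>T. frob_inner d (\<lambda>k. x k - p k) w = 0))"

end

theory Submission
  imports Defs
begin

text \<open>Every point of the flag manifold is a tuple of symmetric involutions
  c_k = V J_k V^T, so differentiating c_k^2 = I along a curve shows that each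
  tangent vector W satisfies c_k W_k + W_k c_k = 0.  A matrix of the form L c + c L is
  Frobenius-orthogonal to every such W_k, because
  tr((L c + c L)^T W) = tr(L^T (W c + c W)) = 0.
  Conjugating by V, the k-th entry of T_2 is of this form with L = V \<Lambda>^2 V^T, so T_2 is
  normal to the flag manifold and its projection onto the tangent space is 0.
  This holds for every matrix \<Lambda>.\<close>

lemma matrix_add_rdistrib: "((A::'a::semiring_1^'n^'m) + B) ** C = A ** C + B ** C"
  by (vector matrix_matrix_mult_def sum.distrib[symmetric] field_simps)

lemma transpose_add: "transpose ((A::'a::plus^'n^'m) + B) = transpose A + transpose B"
  by (simp add: transpose_def vec_eq_iff)

lemma bounded_bilinear_matrix_mult:
  "bounded_bilinear ((**) :: real^'n^'m \<Rightarrow> real^'p^'n \<Rightarrow> real^'p^'m)"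
proof -
  have "bilinear ((**) :: real^'n^'m \<Rightarrow> real^'p^'n \<Rightarrow> real^'p^'m)"
    unfolding bilinear_def
    by (auto intro!: linearI
        simp: matrix_add_ldistrib matrix_add_rdistrib scalar_matrix_assoc matrix_scalar_ac)
  then show ?thesis
    by (rule bilinear_conv_bounded_bilinear[THEN iffD1])
qed

lemma sum_entrywise_mult_eq_trace:
  "(\<Sum>i\<in>UNIV. \<Sum>j\<in>UNIV. (A::'a::comm_semiring_1^'n^'m) $ i $ j * B $ i $ j)
    = trace (transpose A ** B)"
  unfolding trace_def matrix_matrix_mult_def transpose_def
  by (simp, subst sum.swap, simp)

lemma trace_anticommutator_mult_eq_0:
  fixes C W L :: "'a::comm_ring_1^'n^'n"
  assumes C_symmetric: "transpose C = C" and anticommute: "C ** W + W ** C = 0"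
  shows "trace (transpose (L ** C + C ** L) ** W) = 0"
proof -
  have "trace (transpose (L ** C + C ** L) ** W)
      = trace (C ** transpose L ** W) + trace (transpose L ** C ** W)"
    by (simp add: transpose_add matrix_transpose_mul C_symmetric matrix_add_rdistrib trace_add)
  also have "trace (C ** transpose L ** W) = trace (transpose L ** W ** C)"
    using trace_mul_sym[of C "transpose L ** W"] by (simp add: matrix_mul_assoc)
  also have "trace (transpose L ** W ** C) + trace (transpose L ** C ** W)
      = trace (transpose L ** (C ** W + W ** C))"
    by (simp add: matrix_add_ldistrib trace_add matrix_mul_assoc)
  finally show ?thesis
    by (simp add: anticommute trace_def)
qed

lemma orthogonal_conj_mult:
  fixes V A B :: "real^'n^'n"
  assumes "orthogonal_matrix V"
  shows "(V ** A ** transpose V) ** (V ** B ** transpose V) = V ** (A ** B) ** transpose V"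
proof -
  have VV: "transpose V ** V = mat 1"
    using assms by (simp add: orthogonal_matrix_def)
  have "(V ** A ** transpose V) ** (V ** B ** transpose V)
      = V ** A ** (transpose V ** V) ** B ** transpose V"
    by (simp add: matrix_mul_assoc)
  also have "\<dots> = V ** (A ** B) ** transpose V"
    by (simp add: VV matrix_mul_assoc)
  finally show ?thesis .
qed

lemma orthogonal_conj_anticommutator:
  fixes V L J :: "real^'n^'n"
  assumes "orthogonal_matrix V"
  shows "V ** (L ** J + J ** L) ** transpose V
    = (V ** L ** transpose V) ** (V ** J ** transpose V)
      + (V ** J ** transpose V) ** (V ** L ** transpose V)"
  by (simp add: orthogonal_conj_mult[OF assms] matrix_add_ldistrib matrix_add_rdistrib)

lemma has_vector_derivative_matrix_square:
  fixes \<gamma> :: "real \<Rightarrow> real^'n^'n"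
  assumes "(\<gamma> has_vector_derivative W) (at x)"
  shows "((\<lambda>t. \<gamma> t ** \<gamma> t) has_vector_derivative \<gamma> x ** W + W ** \<gamma> x) (at x)"
  using bounded_bilinear.has_vector_derivative[OF bounded_bilinear_matrix_mult assms assms] .

lemma derivative_of_constant_square_anticommutes:
  fixes \<gamma> :: "real \<Rightarrow> real^'n^'n"
  assumes derivative: "(\<gamma> has_vector_derivative W) (at x)"
    and "open S" "x \<in> S" and square_const: "\<forall>t\<in>S. \<gamma> t ** \<gamma> t = M"
  shows "\<gamma> x ** W + W ** \<gamma> x = 0"
proof -
  have "((\<lambda>t. \<gamma> t ** \<gamma> t) has_vector_derivative 0) (at x)"
    by (rule has_vector_derivative_transform_within_open[where f="\<lambda>_. M" and S=S])
       (use assms in auto)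
  then show ?thesis
    using vector_derivative_unique_at[OF has_vector_derivative_matrix_square[OF derivative]]
    by blast
qed

lemma zero_in_tangent_space: "c \<in> S \<Longrightarrow> (\<lambda>k. 0) \<in> tangent_space S c"
  unfolding tangent_space_def
  by (intro CollectI exI[of _ "\<lambda>_. c"] exI[of _ 1]) auto

lemma tangent_space_curve:
  assumes "w \<in> tangent_space S c"
  obtains \<gamma> e where "e > 0" "\<gamma> 0 = c" "\<forall>t\<in>ball 0 e. \<gamma> t \<in> S"
    "\<And>k. ((\<lambda>t. \<gamma> t k) has_vector_derivative w k) (at 0)"
  using assms unfolding tangent_space_def by (auto simp: dist_real_def)

lemma tangent_space_anticommutes_if_square_const:
  assumes "w \<in> tangent_space S c" and "\<forall>X\<in>S. X k ** X k = M"
  shows "c k ** w k + w k ** c k = 0"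
proof -
  obtain e \<gamma> where "e > 0" "\<gamma> 0 = c" and curve: "\<forall>t\<in>ball 0 e. \<gamma> t \<in> S"
    and "\<And>k. ((\<lambda>t. \<gamma> t k) has_vector_derivative w k) (at 0)"
    using tangent_space_curve[OF assms(1)] by blast
  moreover have "\<forall>t\<in>ball 0 e. \<gamma> t k ** \<gamma> t k = M"
    using curve assms(2) by blast
  ultimately show ?thesis
    using derivative_of_constant_square_anticommutes[of "\<lambda>t. \<gamma> t k" "w k" 0 "ball 0 e" M]
    by simp
qed

lemma tangent_space_component_eq_0:
  assumes "w \<in> tangent_space S c" and "\<forall>X\<in>S. X k = 0"
  shows "w k = 0"
proof -
  obtain e \<gamma> where "e > 0" and curve: "\<forall>t\<in>ball 0 e. \<gamma> t \<in> S"
    and derivative: "\<And>k. ((\<lambda>t. \<gamma> t k) has_vector_derivative w k) (at 0)"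
    using tangent_space_curve[OF assms(1)] by blast
  have "((\<lambda>t. \<gamma> t k) has_vector_derivative 0) (at 0)"
    by (rule has_vector_derivative_transform_within_open[where f="\<lambda>_. 0" and S="ball 0 e"])
       (use \<open>e > 0\<close> curve assms(2) in auto)
  then show ?thesis
    using vector_derivative_unique_at[OF derivative] by blast
qed

lemma Jmat_symmetric: "transpose (Jmat ns d k) = Jmat ns d k"
  by (simp add: transpose_def Jmat_def vec_eq_iff)

lemma Jmat_involutive: "Jmat ns d k ** Jmat ns d k = mat 1" (is "?J ** ?J = _")
proof -
  have "(?J ** ?J) $ i $ j = mat 1 $ i $ j" for i j
    by (simp add: matrix_matrix_mult_def Jmat_def mat_def if_distrib[of "\<lambda>x. _ * x"]
        sum.delta' cong: if_cong)
  then show ?thesis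
    by (simp add: vec_eq_iff)
qed

lemma flag_set_involutive:
  assumes "X \<in> flag_set ns d" and "k \<in> {1..d}"
  shows "X k ** X k = mat 1"
proof -
  obtain U where U: "orthogonal_matrix U" and X: "X = tuple_conj d U (Jmat ns d)"
    using assms(1) unfolding flag_set_def by blast
  have "X k ** X k = U ** (Jmat ns d k ** Jmat ns d k) ** transpose U"
    using assms(2) by (simp add: X tuple_conj_def orthogonal_conj_mult[OF U])
  also have "\<dots> = mat 1"
    using U by (simp add: Jmat_involutive orthogonal_matrix_def)
  finally show ?thesis .
qed

lemma flag_set_component_eq_0: "X \<in> flag_set ns d \<Longrightarrow> k \<notin> {1..d} \<Longrightarrow> X k = 0"
  unfolding flag_set_def tuple_conj_def by auto

lemma frob_inner_self_eq_0D:
  assumes "frob_inner d p p = 0" and "k \<in> {1..d}"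
  shows "p k = 0"
proof -
  have "\<forall>k\<in>{1..d}. \<forall>i\<in>UNIV. \<forall>j\<in>UNIV. p k $ i $ j * p k $ i $ j = 0"
    using assms(1) unfolding frob_inner_def by (simp add: sum_nonneg_eq_0_iff sum_nonneg)
  then show ?thesis
    using assms(2) by (simp add: vec_eq_iff)
qed

lemma orth_proj_eq_0I:
  assumes "(\<lambda>k. 0) \<in> T" and orthogonal: "\<forall>w\<in>T. frob_inner d x w = 0"
    and vanishing: "\<forall>w\<in>T. \<forall>k. k \<notin> {1..d} \<longrightarrow> w k = 0"
  shows "orth_proj d T x = (\<lambda>k. 0)"
  unfolding orth_proj_def
proof (rule the_equality)
  show "(\<lambda>k. 0) \<in> T \<and> (\<forall>w\<in>T. frob_inner d (\<lambda>k. x k - (\<lambda>k. 0) k) w = 0)"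
    using assms(1) orthogonal by simp
next
  fix p assume p: "p \<in> T \<and> (\<forall>w\<in>T. frob_inner d (\<lambda>k. x k - p k) w = 0)"
  have "frob_inner d (\<lambda>k. x k - p k) p = frob_inner d x p - frob_inner d p p"
    unfolding frob_inner_def by (simp add: left_diff_distrib sum_subtractf)
  then have "frob_inner d p p = 0"
    using p orthogonal by simp
  then have "p k = 0" for k
    using frob_inner_self_eq_0D[of d p k] vanishing p by blast
  then show "p = (\<lambda>k. 0)" by auto
qed

lemma flag_tangent_orthogonal_anticommutator:
  fixes V L :: "real^('n::{finite,linorder})^('n::{finite,linorder})"
  assumes V: "orthogonal_matrix V"
    and w: "w \<in> tangent_space (flag_set ns d) (tuple_conj d V (Jmat ns d))"
  shows "frob_inner d (tuple_conj d V (\<lambda>k. L ** Jmat ns d k + Jmat ns d k ** L)) w = 0"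
proof -
  have "trace (transpose (V ** (L ** Jmat ns d k + Jmat ns d k ** L) ** transpose V) ** w k) = 0"
    if k: "k \<in> {1..d}" for k
  proof -
    let ?C = "V ** Jmat ns d k ** transpose V"
    have "\<forall>X\<in>flag_set ns d. X k ** X k = mat 1"
      using flag_set_involutive k by blast
    then have "?C ** w k + w k ** ?C = 0"
      using k tangent_space_anticommutes_if_square_const[OF w, of k "mat 1"]
      by (simp add: tuple_conj_def)
    moreover have "transpose ?C = ?C"
      by (simp add: matrix_transpose_mul Jmat_symmetric matrix_mul_assoc)
    ultimately show ?thesis
      by (simp add: orthogonal_conj_anticommutator[OF V] trace_anticommutator_mult_eq_0)
  qed
  then show ?thesis
    by (simp add: frob_inner_def tuple_conj_def sum_entrywise_mult_eq_trace)
qed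

theorem lemma3p7:
  fixes ns :: "nat \<Rightarrow> nat" and d :: nat
    and V V' :: "real \<Rightarrow> real^('n::{finite,linorder})^('n::{finite,linorder})" and I :: "real set"
  assumes d_pos: "d \<ge> 1"
    and ns_first: "0 < ns 1"
    and ns_mono: "\<forall>k. 1 \<le> k \<and> k < d \<longrightarrow> ns k < ns (Suc k)"
    and ns_last: "ns d < CARD('n)"
    and I_open: "open I"
    and V_orth: "\<forall>t\<in>I. orthogonal_matrix (V t)"
    and V_deriv: "\<forall>t\<in>I. (V has_vector_derivative V' t) (at t)"
    and diag_zero: "\<forall>t\<in>I. \<forall>i j. blk ns d i = blk ns d j \<longrightarrow>
                       (transpose (V t) ** V' t) $ i $ j = 0"
  shows "\<forall>t\<in>I.
    (let \<Lambda> = transpose (V t) ** V' t;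
         c = tuple_conj d (V t) (Jmat ns d);
         T2 = tuple_conj d (V t) (\<lambda>k. \<Lambda> ** \<Lambda> ** Jmat ns d k + Jmat ns d k ** \<Lambda> ** \<Lambda>)
     in orth_proj d (tangent_space (flag_set ns d) c) T2 = (\<lambda>k. 0))"
proof (intro ballI, unfold Let_def)
  fix t assume "t \<in> I"
  then have V: "orthogonal_matrix (V t)"
    using V_orth by blast
  let ?\<Lambda> = "transpose (V t) ** V' t"
  let ?c = "tuple_conj d (V t) (Jmat ns d)"
  have c_in_flag: "?c \<in> flag_set ns d"
    using V unfolding flag_set_def by blast
  show "orth_proj d (tangent_space (flag_set ns d) ?c)
      (tuple_conj d (V t) (\<lambda>k. ?\<Lambda> ** ?\<Lambda> ** Jmat ns d k + Jmat ns d k ** ?\<Lambda> ** ?\<Lambda>)) = (\<lambda>k. 0)"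
  proof (rule orth_proj_eq_0I)
    show "(\<lambda>k. 0) \<in> tangent_space (flag_set ns d) ?c"
      using c_in_flag by (rule zero_in_tangent_space)
    show "\<forall>w\<in>tangent_space (flag_set ns d) ?c. frob_inner d
        (tuple_conj d (V t) (\<lambda>k. ?\<Lambda> ** ?\<Lambda> ** Jmat ns d k + Jmat ns d k ** ?\<Lambda> ** ?\<Lambda>)) w = 0"
      using flag_tangent_orthogonal_anticommutator[OF V, where L = "?\<Lambda> ** ?\<Lambda>"]
      by (simp add: matrix_mul_assoc)
    show "\<forall>w\<in>tangent_space (flag_set ns d) ?c. \<forall>k. k \<notin> {1..d} \<longrightarrow> w k = 0"
      using tangent_space_component_eq_0 flag_set_component_eq_0 by blast
  qed
qed

end
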